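(* In the setup below, every element $R(i;j,k\,|\,l;m,n)$ (with $i\neq l$) and every element $T(i,j\,|\,k,l\,|\,m,n)$ (with $i,k,m$ pairwise distinct) lies in $K_2^T(C)$.
   Context: Let $K$ be a field, $N\ge2$, $N_1,\dots,N_N\ge1$. For $1\le i\le N$, $1\le j\le N_i$ let $L_{i,j}=a_ix+b_iy+c_{i,j}$ with $a_i,b_i,c_{i,j}\in K$, $(a_i,b_i)\ne(0,0)$, such that the affine lines $L_{i,j}=0$ are pairwise distinct and $[i,k]:=a_ib_k-a_kb_i\neq0$ for $i\neq k$. For $\lambda\in K^*$ put $f(x,y)=\lambda\prod_{i,j}L_{i,j}-1$; the affine curve $f=0$ is irreducible. Let $C'\subset\mathbb P^2_K$ be its projective closure, $C$ the normalisation of $C'$ (a regular proper irreducible curve), and $F$ its function field; the $L_{i,j}$ are regarded as elements of $F^*$. $K_2(F)$ is the abelian group generated by symbols $\{a,b\}$, $a,b\in F^*$, with relations $\{a_1a_2,b\}=\{a_1,b\}+\{a_2,b\}$, $\{a,b_1b_2\}=\{a,b_1\}+\{a,b_2\}$, $\{a,1-a\}=0$ for $a\neq0,1$. For a closed point $x$ of $C$ with residue field $k(x)$, the tame symbol is $T_x(\{a,b\})=(-1)^{\mathrm{ord}_x(a)\mathrm{ord}_x(b)}\bigl(a^{\mathrm{ord}_x(b)}/b^{\mathrm{ord}_x(a)}\bigr)(x)\in k(x)^*$, and $K_2^T(C)$ is the kernel of $\bigoplus_x T_x:K_2(F)\to\bigoplus_x k(x)^*$. Define $R(i;j,k\,|\,l;m,n)=\{L_{i,j}/L_{i,k},\,L_{l,m}/L_{l,n}\}$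 for $i\ne l$, and $T(i,j\,|\,k,l\,|\,m,n)=\Bigl\{\frac{[i,m]}{[k,m]}\frac{L_{k,l}}{L_{i,j}},\,\frac{[i,k]}{[m,k]}\frac{L_{m,n}}{L_{i,j}}\Bigr\}$ for $i,k,m$ pairwise distinct (second indices in the appropriate ranges). *)

theory Defs
  imports "HOL-Computational_Algebra.Polynomial"
begin

definition subfield :: "'a::field set \<Rightarrow> bool" where
  "subfield S \<longleftrightarrow> 0 \<in> S \<and> 1 \<in> S \<and>
     (\<forall>u\<in>S. \<forall>w\<in>S. u + w \<in> S \<and> u * w \<in> S \<and> u - w \<in> S) \<and>
     (\<forall>u\<in>S. u \<noteq> 0 \<longrightarrow> inverse u \<in> S)"

definition generated_by :: "'a::field set \<Rightarrow> 'a \<Rightarrow> 'a \<Rightarrow> bool" where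
  "generated_by K x y \<longleftrightarrow>
     (\<forall>S. subfield S \<and> K \<subseteq> S \<and> x \<in> S \<and> y \<in> S \<longrightarrow> S = UNIV)"

definition transcendental_over :: "'a::field set \<Rightarrow> 'a \<Rightarrow> bool" where
  "transcendental_over K x \<longleftrightarrow>
     (\<forall>p. p \<noteq> 0 \<and> (\<forall>n. coeff p n \<in> K) \<longrightarrow> poly p x \<noteq> 0)"

text \<open>Normalised discrete valuations of F trivial on K; these are exactly the
  closed points of the regular proper curve C with function field F.
  (The value at 0 is irrelevant and never used.)\<close>
definition discrete_valuation :: "'a::field set \<Rightarrow> ('a \<Rightarrow> int) \<Rightarrow> bool" where
  "discrete_valuation K v \<longleftrightarrow>
     v ` (UNIV - {0}) = UNIV \<and>
     (\<forall>a b. a \<noteq> 0 \<and> b \<noteq> 0 \<longrightarrow> v (a * b) = v a + v b) \<and>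
     (\<forall>a b. a \<noteq> 0 \<and> b \<noteq> 0 \<and> a + b \<noteq> 0 \<longrightarrow> v (a + b) \<ge> min (v a) (v b)) \<and>
     (\<forall>c\<in>K. c \<noteq> 0 \<longrightarrow> v c = 0)"

text \<open>The element (-1)^(v a v b) a^(v b) / b^(v a), a unit of the valuation ring,
  whose residue class is the tame symbol.\<close>
definition tame_elt :: "('a::field \<Rightarrow> int) \<Rightarrow> 'a \<Rightarrow> 'a \<Rightarrow> 'a" where
  "tame_elt v a b = (-1) powi (v a * v b) * a powi (v b) / b powi (v a)"

text \<open>The tame symbol at v of {a,b} is trivial, i.e. the residue of tame_elt is 1
  in the residue field k(v): the element minus 1 lies in the maximal ideal.\<close>
definition tame_trivial :: "('a::field \<Rightarrow> int) \<Rightarrow> 'a \<Rightarrow> 'a \<Rightarrow> bool" where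
  "tame_trivial v a b \<longleftrightarrow>
     tame_elt v a b = 1 \<or> (tame_elt v a b \<noteq> 1 \<and> v (tame_elt v a b - 1) > 0)"

definition symbol_in_K2T :: "'a::field set \<Rightarrow> 'a \<Rightarrow> 'a \<Rightarrow> bool" where
  "symbol_in_K2T K a b \<longleftrightarrow> (\<forall>v. discrete_valuation K v \<longrightarrow> tame_trivial v a b)"

end

theory Submission
  imports Defs
begin

(* Let v be a discrete valuation of F trivial on K, i.e. a closed point of C.
   Either v(x) >= 0 and v(y) >= 0: then every L_{i,j} is integral at v, and since
   lam * prod L_{i,j} = 1 with lam a constant, every L_{i,j} is a v-unit.  Or v has a
   pole t = min(v x, v y) < 0: then every L_{i,j} has valuation >= t, and two lines
   L_{i,j}, L_{k,l} of different directions (i <> k) cannot both have valuation > t,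
   because x and y are K-linear combinations of them (plus constants).
   In both situations the tame symbols of R and T are computed from three principles:
   symbols of two units are trivial, and {a,b} is trivial at v whenever a, b or -a/b is
   a principal unit (congruent to 1 modulo the maximal ideal). *)

lemma subfield_add: "subfield K \<Longrightarrow> u \<in> K \<Longrightarrow> w \<in> K \<Longrightarrow> u + w \<in> K"
  and subfield_mult: "subfield K \<Longrightarrow> u \<in> K \<Longrightarrow> w \<in> K \<Longrightarrow> u * w \<in> K"
  and subfield_diff: "subfield K \<Longrightarrow> u \<in> K \<Longrightarrow> w \<in> K \<Longrightarrow> u - w \<in> K"
  unfolding subfield_def by blast+

lemma subfield_divide: "subfield K \<Longrightarrow> u \<in> K \<Longrightarrow> w \<in> K \<Longrightarrow> u / w \<in> K"
  unfolding subfield_def divide_inverse by (cases "w = 0") auto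

section \<open>Discrete valuations\<close>

locale discrete_val =
  fixes K :: "'a::field set" and v :: "'a \<Rightarrow> int"
  assumes discrete_valuation: "discrete_valuation K v"
begin

lemma val_mult: "a \<noteq> 0 \<Longrightarrow> b \<noteq> 0 \<Longrightarrow> v (a * b) = v a + v b"
  using discrete_valuation unfolding discrete_valuation_def by blast

lemma val_add: "a \<noteq> 0 \<Longrightarrow> b \<noteq> 0 \<Longrightarrow> a + b \<noteq> 0 \<Longrightarrow> min (v a) (v b) \<le> v (a + b)"
  using discrete_valuation unfolding discrete_valuation_def by blast

lemma val_const: "c \<in> K \<Longrightarrow> c \<noteq> 0 \<Longrightarrow> v c = 0"
  using discrete_valuation unfolding discrete_valuation_def by blast

lemma val_one: "v 1 = 0"
  using val_mult[of 1 1] by simp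

lemma val_inverse: "a \<noteq> 0 \<Longrightarrow> v (inverse a) = - v a"
  using val_mult[of a "inverse a"] val_one by simp

lemma val_divide: "a \<noteq> 0 \<Longrightarrow> b \<noteq> 0 \<Longrightarrow> v (a / b) = v a - v b"
  by (simp add: divide_inverse val_mult val_inverse)

lemma val_uminus:
  assumes "a \<noteq> 0"
  shows "v (- a) = v a"
proof -
  have "v (-1) = 0" using val_mult[of "-1" "-1"] val_one by simp
  then show ?thesis using val_mult[of "-1" a] assms by simp
qed

lemma val_prod: "finite S \<Longrightarrow> (\<And>s. s \<in> S \<Longrightarrow> f s \<noteq> 0) \<Longrightarrow> v (prod f S) = (\<Sum>s\<in>S. v (f s))"
  by (induction S rule: finite_induct) (simp_all add: val_one val_mult prod_zero_iff)

lemma val_prod_unit: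
  assumes "finite S" "\<And>s. s \<in> S \<Longrightarrow> f s \<noteq> 0" "\<And>s. s \<in> S \<Longrightarrow> 0 \<le> v (f s)"
    and "v (prod f S) = 0" and "s \<in> S"
  shows "v (f s) = 0"
  using assms sum_nonneg_eq_0_iff[of S "\<lambda>s. v (f s)"] val_prod[of S f] by simp

text \<open>\<open>val_ge s z\<close>: z lies in the fractional ideal of elements of valuation at least s
  (the value of v at 0 is meaningless, so 0 is included explicitly).\<close>
definition val_ge :: "int \<Rightarrow> 'a \<Rightarrow> bool" where
  "val_ge s z \<longleftrightarrow> z = 0 \<or> s \<le> v z"

lemma val_ge_nonzero: "z \<noteq> 0 \<Longrightarrow> val_ge s z \<longleftrightarrow> s \<le> v z"
  unfolding val_ge_def by simp

lemma val_ge_mono: "s' \<le> s \<Longrightarrow> val_ge s z \<Longrightarrow> val_ge s' z"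
  unfolding val_ge_def by auto

lemma val_ge_const: "c \<in> K \<Longrightarrow> val_ge 0 c"
  unfolding val_ge_def using val_const by (cases "c = 0") auto

lemma val_ge_add: "val_ge s a \<Longrightarrow> val_ge s b \<Longrightarrow> val_ge s (a + b)"
  unfolding val_ge_def using val_add[of a b] by fastforce

lemma val_ge_uminus: "val_ge s a \<Longrightarrow> val_ge s (- a)"
  unfolding val_ge_def using val_uminus by (cases "a = 0") auto

lemma val_ge_diff: "val_ge s a \<Longrightarrow> val_ge s b \<Longrightarrow> val_ge s (a - b)"
  using val_ge_add[of s a "- b"] val_ge_uminus by simp

lemma val_ge_mult: "val_ge s a \<Longrightarrow> val_ge r b \<Longrightarrow> val_ge (s + r) (a * b)"
  unfolding val_ge_def using val_mult by (cases "a = 0"; cases "b = 0") auto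

lemma val_ge_const_mult: "c \<in> K \<Longrightarrow> val_ge s a \<Longrightarrow> val_ge s (c * a)"
  using val_ge_mult[OF val_ge_const] by simp

lemma val_ge_divide: "val_ge s a \<Longrightarrow> b \<noteq> 0 \<Longrightarrow> val_ge (s - v b) (a / b)"
  unfolding val_ge_def using val_divide by (cases "a = 0") auto

lemma pole_order_exists:
  assumes "\<not> (val_ge 0 x \<and> val_ge 0 y)"
  shows "\<exists>t < 0. val_ge t x \<and> val_ge t y \<and> \<not> (val_ge (t + 1) x \<and> val_ge (t + 1) y)"
proof -
  have "\<exists>z. (z = x \<or> z = y) \<and> z \<noteq> 0 \<and> v z < 0 \<and> val_ge (v z) x \<and> val_ge (v z) y"
  proof (cases "x \<noteq> 0 \<and> v x < 0 \<and> (y = 0 \<or> v x \<le> v y)")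
    case True
    then show ?thesis by (intro exI[of _ x]) (auto simp: val_ge_def)
  next
    case False
    then show ?thesis using assms by (intro exI[of _ y]) (auto simp: val_ge_def)
  qed
  then obtain z where "z = x \<or> z = y" "z \<noteq> 0" "v z < 0" "val_ge (v z) x" "val_ge (v z) y"
    by blast
  then show ?thesis by (intro exI[of _ "v z"]) (auto simp: val_ge_nonzero)
qed

text \<open>They form a
  subgroup of the units, and a tame symbol is trivial exactly when its representative
  \<open>tame_elt\<close> is a principal unit.\<close>
definition principal_unit :: "'a \<Rightarrow> bool" where
  "principal_unit w \<longleftrightarrow> w \<noteq> 0 \<and> val_ge 1 (w - 1)"

lemma principal_unit_one: "principal_unit 1"
  unfolding principal_unit_def val_ge_def by simp

lemma principal_unit_integral: "principal_unit w \<Longrightarrow> val_ge 0 w"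
proof -
  assume "principal_unit w"
  then have "val_ge 0 (w - 1)" unfolding principal_unit_def using val_ge_mono[of 0 1] by simp
  moreover have "val_ge 0 1" by (simp add: val_ge_def val_one)
  ultimately show ?thesis using val_ge_add[of 0 "w - 1" 1] by simp
qed

lemma principal_unit_val: "principal_unit w \<Longrightarrow> v w = 0"
proof -
  assume w: "principal_unit w"
  then have w0: "w \<noteq> 0" and near: "val_ge 1 (w - 1)"
    unfolding principal_unit_def by auto
  have "0 \<le> v w" using principal_unit_integral[OF w] w0 by (simp add: val_ge_nonzero)
  moreover have "\<not> 0 < v w"
  proof
    assume "0 < v w"
    then have "val_ge 1 w" using w0 by (simp add: val_ge_nonzero)
    then have "val_ge 1 (w - (w - 1))" using near by (rule val_ge_diff)
    then show False by (simp add: val_ge_def val_one)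
  qed
  ultimately show ?thesis by simp
qed

lemma principal_unit_mult: "principal_unit a \<Longrightarrow> principal_unit b \<Longrightarrow> principal_unit (a * b)"
proof -
  assume a: "principal_unit a" and b: "principal_unit b"
  have "val_ge (0 + 1) (a * (b - 1))"
    using val_ge_mult[OF principal_unit_integral[OF a]] b unfolding principal_unit_def by blast
  then have "val_ge 1 (a * (b - 1) + (a - 1))"
    using a val_ge_add unfolding principal_unit_def by simp
  moreover have "a * (b - 1) + (a - 1) = a * b - 1" by (simp add: algebra_simps)
  ultimately show ?thesis using a b unfolding principal_unit_def by simp
qed

lemma principal_unit_inverse: "principal_unit a \<Longrightarrow> principal_unit (inverse a)"
proof -
  assume a: "principal_unit a"
  then have a0: "a \<noteq> 0" unfolding principal_unit_def by simp
  have "val_ge (1 - v a) (- (a - 1) / a)"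
    using val_ge_divide[OF val_ge_uminus a0] a unfolding principal_unit_def by blast
  moreover have "- (a - 1) / a = inverse a - 1" using a0 by (simp add: field_simps)
  ultimately show ?thesis using a0 principal_unit_val[OF a] unfolding principal_unit_def by simp
qed

lemma principal_unit_power_int: "principal_unit a \<Longrightarrow> principal_unit (a powi n)"
proof -
  assume a: "principal_unit a"
  have "principal_unit (a ^ k)" for k
    by (induction k) (simp_all add: principal_unit_one principal_unit_mult a)
  then show ?thesis
    unfolding power_int_def using principal_unit_inverse by (simp add: power_inverse)
qed

lemma principal_unit_quotient:
  assumes "u \<noteq> 0" "w \<noteq> 0" "val_ge (v w + 1) (u - w)"
  shows "principal_unit (u / w)"
proof -
  have "u / w - 1 = (u - w) / w" using assms(2) by (simp add: field_simps)
  then show ?thesis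
    using val_ge_divide[OF assms(3,2)] assms(1,2) unfolding principal_unit_def by simp
qed

section \<open>Criteria for trivial tame symbols\<close>

lemma tame_trivial_principal_unit: "principal_unit (tame_elt v a b) \<Longrightarrow> tame_trivial v a b"
  unfolding principal_unit_def tame_trivial_def val_ge_def by auto

lemma tame_trivial_units: "v a = 0 \<Longrightarrow> v b = 0 \<Longrightarrow> tame_trivial v a b"
  unfolding tame_trivial_def tame_elt_def by simp

lemma tame_trivial_principal_left: "principal_unit a \<Longrightarrow> tame_trivial v a b"
proof -
  assume a: "principal_unit a"
  have "tame_elt v a b = a powi v b" unfolding tame_elt_def using principal_unit_val[OF a] by simp
  then show ?thesis using a by (simp add: tame_trivial_principal_unit principal_unit_power_int)
qed

lemma tame_trivial_principal_right: "principal_unit b \<Longrightarrow> tame_trivial v a b"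
proof -
  assume b: "principal_unit b"
  have "tame_elt v a b = inverse (b powi v a)"
    unfolding tame_elt_def using principal_unit_val[OF b] by (simp add: divide_inverse)
  then show ?thesis using b
    by (simp add: tame_trivial_principal_unit principal_unit_inverse principal_unit_power_int)
qed

lemma tame_trivial_principal_ratio: "principal_unit (- (a / b)) \<Longrightarrow> tame_trivial v a b"
proof -
  assume r: "principal_unit (- (a / b))"
  then have "a \<noteq> 0" "b \<noteq> 0" unfolding principal_unit_def by auto
  then have same: "v a = v b"
    using principal_unit_val[OF r] by (simp add: val_uminus val_divide)
  have "tame_elt v a b = (- (a / b)) powi v a"
    unfolding tame_elt_def same
    by (cases "even (v b)") (simp_all add: power_int_minus_left power_int_divide_distrib)
  then show ?thesis using r by (simp add: tame_trivial_principal_unit principal_unit_power_int)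
qed

text \<open>Either all four elements are units, or both members of one ratio have the same pole
  order t, and then that ratio is a principal unit.\<close>
lemma tame_trivial_ratio_symbol:
  assumes nz: "A1 \<noteq> 0" "A2 \<noteq> 0" "B1 \<noteq> 0" "B2 \<noteq> 0"
    and const: "A1 - A2 \<in> K" "B1 - B2 \<in> K"
    and vals: "(v A1 = 0 \<and> v A2 = 0 \<and> v B1 = 0 \<and> v B2 = 0) \<or>
               (\<exists>t<0. v A1 = t \<and> v A2 = t \<or> v B1 = t \<and> v B2 = t)"
  shows "tame_trivial v (A1 / A2) (B1 / B2)"
proof -
  have ratio: "principal_unit (P1 / P2)" if "P1 \<noteq> 0" "P2 \<noteq> 0" "P1 - P2 \<in> K" "v P2 < 0" for P1 P2
    using principal_unit_quotient that val_ge_mono[OF _ val_ge_const[OF that(3)]] by simp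
  from vals show ?thesis
  proof
    assume "v A1 = 0 \<and> v A2 = 0 \<and> v B1 = 0 \<and> v B2 = 0"
    then show ?thesis using nz by (simp add: tame_trivial_units val_divide)
  next
    assume "\<exists>t<0. v A1 = t \<and> v A2 = t \<or> v B1 = t \<and> v B2 = t"
    then show ?thesis
      using ratio nz const tame_trivial_principal_left tame_trivial_principal_right by metis
  qed
qed

text \<open>At a pole, where the minimum valuation t < 0 of A, B, C
  is attained exactly twice, one of \<open>\<alpha>B/A\<close>, \<open>\<beta>C/A\<close>, minus their ratio is a principal unit.\<close>
lemma tame_trivial_triangle_pole:
  assumes nz: "A \<noteq> 0" "B \<noteq> 0" "C \<noteq> 0"
    and in_K: "\<alpha> \<in> K" "\<alpha> \<noteq> 0" "\<beta> \<in> K" "\<beta> \<noteq> 0" "\<gamma> \<in> K"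
    and rel: "\<alpha> * B + \<beta> * C = A + \<gamma>"
    and t: "t < 0" "t \<le> v A" "t \<le> v B" "t \<le> v C"
    and twice: "v A = t \<and> v B = t \<or> v A = t \<and> v C = t \<or> v B = t \<and> v C = t"
    and unequal: "\<not> (v A = v B \<and> v A = v C)"
  shows "tame_trivial v (\<alpha> * B / A) (\<beta> * C / A)"
proof -
  have vB: "v (\<alpha> * B) = v B" and vC: "v (\<beta> * C) = v C"
    using nz in_K by (simp_all add: val_mult val_const)
  have nzBC: "\<alpha> * B \<noteq> 0" "\<beta> * C \<noteq> 0" using nz in_K by auto
  have \<gamma>_small: "val_ge (t + 1) \<gamma>"
    using val_ge_mono[OF _ val_ge_const[OF in_K(5)]] t(1) by simp
  have above: "val_ge (t + 1) z" if "z \<noteq> 0" "t < v z" for z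
    using that by (simp add: val_ge_nonzero)
  consider (AB) "v A = t" "v B = t" "t < v C"
    | (AC) "v A = t" "v C = t" "t < v B"
    | (BC) "v B = t" "v C = t" "t < v A"
    using t twice unequal by fastforce
  then show ?thesis
  proof cases
    case AB
    have "\<alpha> * B - A = \<gamma> - \<beta> * C" using rel by (simp add: algebra_simps)
    moreover have "val_ge (t + 1) (\<gamma> - \<beta> * C)"
      using val_ge_diff[OF \<gamma>_small above] nzBC vC AB by simp
    ultimately have "principal_unit (\<alpha> * B / A)"
      using principal_unit_quotient[of "\<alpha> * B" A] nz nzBC AB by simp
    then show ?thesis by (rule tame_trivial_principal_left)
  next
    case AC
    have "\<beta> * C - A = \<gamma> - \<alpha> * B" using rel by (simp add: algebra_simps)
    moreover have "val_ge (t + 1) (\<gamma> - \<alpha> * B)"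
      using val_ge_diff[OF \<gamma>_small above] nzBC vB AC by simp
    ultimately have "principal_unit (\<beta> * C / A)"
      using principal_unit_quotient[of "\<beta> * C" A] nz nzBC AC by simp
    then show ?thesis by (rule tame_trivial_principal_right)
  next
    case BC
    have "- (\<alpha> * B) - \<beta> * C = - (A + \<gamma>)" using rel by (simp add: algebra_simps)
    moreover have "val_ge (t + 1) (- (A + \<gamma>))"
      using val_ge_uminus[OF val_ge_add[OF above \<gamma>_small]] nz BC by simp
    ultimately have "principal_unit (- (\<alpha> * B) / (\<beta> * C))"
      using principal_unit_quotient[of "- (\<alpha> * B)" "\<beta> * C"] nzBC vC BC by simp
    moreover have "- (\<alpha> * B) / (\<beta> * C) = - ((\<alpha> * B / A) / (\<beta> * C / A))"
      using nz by (simp add: field_simps)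
    ultimately show ?thesis using tame_trivial_principal_ratio by metis
  qed
qed

lemma tame_trivial_triangle_symbol:
  assumes nz: "A \<noteq> 0" "B \<noteq> 0" "C \<noteq> 0"
    and in_K: "\<alpha> \<in> K" "\<alpha> \<noteq> 0" "\<beta> \<in> K" "\<beta> \<noteq> 0" "\<gamma> \<in> K"
    and rel: "\<alpha> * B + \<beta> * C = A + \<gamma>"
    and vals: "(v A = 0 \<and> v B = 0 \<and> v C = 0) \<or>
      (\<exists>t<0. t \<le> v A \<and> t \<le> v B \<and> t \<le> v C \<and>
          (v A = t \<and> v B = t \<or> v A = t \<and> v C = t \<or> v B = t \<and> v C = t))"
  shows "tame_trivial v (\<alpha> * B / A) (\<beta> * C / A)"
proof (cases "v A = v B \<and> v A = v C")
  case True
  then show ?thesis using nz in_K by (simp add: tame_trivial_units val_divide val_mult val_const)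
next
  case False
  then show ?thesis using vals tame_trivial_triangle_pole[OF nz in_K rel] by auto
qed

end

section \<open>The line arrangement\<close>

text \<open>The data of the theorem: lines \<open>L i j = a i x + b i y + c i j\<close> with constant coefficients,
  grouped into N families of parallel lines with pairwise independent directions
  (\<open>br i k = [i,k] \<noteq> 0\<close>), and the curve equation \<open>lam \<Prod> L i j = 1\<close>.\<close>
locale line_arrangement =
  fixes K :: "'a::field set" and x y lam :: 'a and N :: nat and Ns :: "nat \<Rightarrow> nat"
    and a b :: "nat \<Rightarrow> 'a" and c L br :: "nat \<Rightarrow> nat \<Rightarrow> 'a"
  assumes subfield: "subfield K"
    and a_in_K: "i \<in> {1..N} \<Longrightarrow> a i \<in> K"
    and b_in_K: "i \<in> {1..N} \<Longrightarrow> b i \<in> K"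
    and c_in_K: "i \<in> {1..N} \<Longrightarrow> j \<in> {1..Ns i} \<Longrightarrow> c i j \<in> K"
    and bracket_eq: "br i k = a i * b k - a k * b i"
    and bracket_nonzero: "i \<in> {1..N} \<Longrightarrow> k \<in> {1..N} \<Longrightarrow> i \<noteq> k \<Longrightarrow> br i k \<noteq> 0"
    and lam_in_K: "lam \<in> K" and lam_nonzero: "lam \<noteq> 0"
    and line_eq: "L i j = a i * x + b i * y + c i j"
    and curve: "lam * (\<Prod>i\<in>{1..N}. \<Prod>j\<in>{1..Ns i}. L i j) = 1"
begin

definition indices :: "(nat \<times> nat) set" where
  "indices = Sigma {1..N} (\<lambda>i. {1..Ns i})"

lemma finite_indices: "finite indices"
  unfolding indices_def by simp

lemma curve_indices: "lam * (\<Prod>(i, j)\<in>indices. L i j) = 1"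
  using curve unfolding indices_def by (simp add: prod.Sigma)

lemma line_nonzero:
  assumes "i \<in> {1..N}" "j \<in> {1..Ns i}"
  shows "L i j \<noteq> 0"
proof -
  have "(\<Prod>(i, j)\<in>indices. L i j) \<noteq> 0" using curve_indices by auto
  then show ?thesis using assms finite_indices by (auto simp: prod_zero_iff indices_def)
qed

lemma bracket_in_K: "i \<in> {1..N} \<Longrightarrow> k \<in> {1..N} \<Longrightarrow> br i k \<in> K"
  using a_in_K b_in_K bracket_eq subfield_mult[OF subfield] subfield_diff[OF subfield] by metis

text \<open>Cramer's rule: two lines of different directions determine the coordinates.\<close>
lemma coordinates_from_lines:
  "br i k * x = b k * (L i j - c i j) - b i * (L k l - c k l)"
  "br i k * y = a i * (L k l - c k l) - a k * (L i j - c i j)"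
  by (simp_all add: line_eq bracket_eq algebra_simps)

text \<open>Three lines of pairwise different directions satisfy a linear relation with
  constant coefficients; this is the relation behind the symbols T.\<close>
lemma three_lines_relation:
  assumes "br k m \<noteq> 0"
  shows "br i m / br k m * L k l + br i k / br m k * L m n =
         L i j + (br i m / br k m * c k l + br i k / br m k * c m n - c i j)"
proof -
  have "br m k = - br k m" by (simp add: bracket_eq)
  moreover have "br i m * (L k l - c k l) - br i k * (L m n - c m n) = br k m * (L i j - c i j)"
    by (simp add: line_eq bracket_eq algebra_simps)
  ultimately show ?thesis using assms by (simp add: field_simps)
qed

end

section \<open>The line functions at a place of the curve\<close>

locale arrangement_place = line_arrangement + discrete_val
begin

lemma line_val_ge:
  assumes "s \<le> 0" "val_ge s x" "val_ge s y" "i \<in> {1..N}" "j \<in> {1..Ns i}"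
  shows "val_ge s (L i j)"
proof -
  have "val_ge s (a i * x + b i * y + c i j)"
    using assms a_in_K b_in_K c_in_K val_ge_add val_ge_const_mult val_ge_mono[OF _ val_ge_const]
    by metis
  then show ?thesis by (simp add: line_eq)
qed

text \<open>Conversely, by Cramer's rule, two lines of different directions bound the
  coordinates.\<close>
lemma coordinates_val_ge:
  assumes s: "s \<le> 0" and ik: "i \<in> {1..N}" "k \<in> {1..N}" "i \<noteq> k"
    and jl: "j \<in> {1..Ns i}" "l \<in> {1..Ns k}"
    and lines: "val_ge s (L i j)" "val_ge s (L k l)"
  shows "val_ge s x \<and> val_ge s y"
proof -
  have br: "br i k \<noteq> 0" "v (br i k) = 0"
    using bracket_nonzero bracket_in_K val_const ik by auto
  have shifted: "val_ge s (L i j - c i j)" "val_ge s (L k l - c k l)"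
    using lines val_ge_diff val_ge_mono[OF s val_ge_const] c_in_K ik jl by auto
  have "val_ge s (br i k * x)" "val_ge s (br i k * y)"
    unfolding coordinates_from_lines[where i=i and k=k and j=j and l=l]
    using shifted a_in_K b_in_K ik val_ge_diff val_ge_const_mult by auto
  then show ?thesis
    using val_ge_divide[of s _ "br i k"] br by (metis diff_zero nonzero_mult_div_cancel_left)
qed

text \<open>At a place where x and y are integral, every line is a unit: the lines are
  integral and their product is the inverse of the constant lam.\<close>
lemma lines_units_at_integral_place:
  assumes "val_ge 0 x" "val_ge 0 y" "i \<in> {1..N}" "j \<in> {1..Ns i}"
  shows "v (L i j) = 0"
proof -
  have nonzero: "\<And>p. p \<in> indices \<Longrightarrow> case_prod L p \<noteq> 0"
    and integral: "\<And>p. p \<in> indices \<Longrightarrow> 0 \<le> v (case_prod L p)"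
    using line_nonzero line_val_ge[of 0] assms(1,2) by (auto simp: indices_def val_ge_nonzero)
  have "prod (case_prod L) indices \<noteq> 0"
    using nonzero finite_indices by (simp add: prod_zero_iff)
  moreover have "v (lam * prod (case_prod L) indices) = 0"
    using curve_indices val_one by simp
  ultimately have "v (prod (case_prod L) indices) = 0"
    using val_mult[OF lam_nonzero] val_const[OF lam_in_K lam_nonzero] by simp
  then show ?thesis
    using val_prod_unit[of indices "case_prod L" "(i, j)"] finite_indices nonzero integral assms(3,4)
    by (simp add: indices_def)
qed

lemma lines_at_pole:
  assumes t: "t < 0" "val_ge t x" "val_ge t y" "\<not> (val_ge (t + 1) x \<and> val_ge (t + 1) y)"
  shows "\<And>i j. i \<in> {1..N} \<Longrightarrow> j \<in> {1..Ns i} \<Longrightarrow> t \<le> v (L i j)"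
    and "\<And>i j k l. i \<in> {1..N} \<Longrightarrow> k \<in> {1..N} \<Longrightarrow> i \<noteq> k \<Longrightarrow> j \<in> {1..Ns i} \<Longrightarrow>
           l \<in> {1..Ns k} \<Longrightarrow> v (L i j) = t \<or> v (L k l) = t"
proof -
  show lower: "t \<le> v (L i j)" if "i \<in> {1..N}" "j \<in> {1..Ns i}" for i j
    using line_val_ge[of t] t that line_nonzero by (simp add: val_ge_nonzero)
  show "v (L i j) = t \<or> v (L k l) = t"
    if ik: "i \<in> {1..N}" "k \<in> {1..N}" "i \<noteq> k" and jl: "j \<in> {1..Ns i}" "l \<in> {1..Ns k}"
    for i j k l
  proof (rule ccontr)
    assume "\<not> (v (L i j) = t \<or> v (L k l) = t)"
    then have "val_ge (t + 1) (L i j)" "val_ge (t + 1) (L k l)"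
      using lower[OF ik(1) jl(1)] lower[OF ik(2) jl(2)] line_nonzero ik jl
      by (auto simp: val_ge_nonzero)
    then show False using coordinates_val_ge[of "t + 1"] t ik jl by auto
  qed
qed

lemma line_valuations:
  "(\<forall>i\<in>{1..N}. \<forall>j\<in>{1..Ns i}. v (L i j) = 0) \<or>
   (\<exists>t<0. (\<forall>i\<in>{1..N}. \<forall>j\<in>{1..Ns i}. t \<le> v (L i j)) \<and>
      (\<forall>i k j l. i \<in> {1..N} \<longrightarrow> k \<in> {1..N} \<longrightarrow> i \<noteq> k \<longrightarrow> j \<in> {1..Ns i} \<longrightarrow>
         l \<in> {1..Ns k} \<longrightarrow> v (L i j) = t \<or> v (L k l) = t))"
proof (cases "val_ge 0 x \<and> val_ge 0 y")
  case True
  then show ?thesis using lines_units_at_integral_place by blast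
next
  case False
  then obtain t where "t < 0" "val_ge t x" "val_ge t y" "\<not> (val_ge (t + 1) x \<and> val_ge (t + 1) y)"
    using pole_order_exists by blast
  then show ?thesis using lines_at_pole by blast
qed

lemma R_tame_trivial:
  assumes il: "i \<in> {1..N}" "l \<in> {1..N}" "i \<noteq> l"
    and jk: "j \<in> {1..Ns i}" "k \<in> {1..Ns i}" and mn: "m \<in> {1..Ns l}" "n \<in> {1..Ns l}"
  shows "tame_trivial v (L i j / L i k) (L l m / L l n)"
proof (rule tame_trivial_ratio_symbol)
  show "L i j \<noteq> 0" "L i k \<noteq> 0" "L l m \<noteq> 0" "L l n \<noteq> 0"
    using line_nonzero il jk mn by auto
  show "L i j - L i k \<in> K" "L l m - L l n \<in> K"
    using subfield_diff[OF subfield] c_in_K il jk mn by (simp_all add: line_eq)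
  show "v (L i j) = 0 \<and> v (L i k) = 0 \<and> v (L l m) = 0 \<and> v (L l n) = 0 \<or>
      (\<exists>t<0. v (L i j) = t \<and> v (L i k) = t \<or> v (L l m) = t \<and> v (L l n) = t)"
    using line_valuations il jk mn by metis
qed

lemma T_tame_trivial:
  assumes ikm: "i \<in> {1..N}" "k \<in> {1..N}" "m \<in> {1..N}" "i \<noteq> k" "i \<noteq> m" "k \<noteq> m"
    and jln: "j \<in> {1..Ns i}" "l \<in> {1..Ns k}" "n \<in> {1..Ns m}"
  shows "tame_trivial v (br i m / br k m * L k l / L i j) (br i k / br m k * L m n / L i j)"
proof -
  have br: "br i m \<noteq> 0" "br k m \<noteq> 0" "br i k \<noteq> 0" "br m k \<noteq> 0"
    using bracket_nonzero ikm by auto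
  have coeffs: "br i m / br k m \<in> K" "br i k / br m k \<in> K"
    using subfield_divide[OF subfield] bracket_in_K ikm by auto
  have "br i m / br k m * c k l + br i k / br m k * c m n - c i j \<in> K"
    using subfield_mult[OF subfield] subfield_add[OF subfield] subfield_diff[OF subfield]
      coeffs c_in_K ikm jln by meson
  moreover have "v (L i j) = 0 \<and> v (L k l) = 0 \<and> v (L m n) = 0 \<or>
      (\<exists>t<0. t \<le> v (L i j) \<and> t \<le> v (L k l) \<and> t \<le> v (L m n) \<and>
        (v (L i j) = t \<and> v (L k l) = t \<or> v (L i j) = t \<and> v (L m n) = t \<or>
         v (L k l) = t \<and> v (L m n) = t))"
    using line_valuations ikm jln by metis
  ultimately show ?thesis
    using tame_trivial_triangle_symbol[OF _ _ _ coeffs(1) _ coeffs(2) _ _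
        three_lines_relation[OF br(2)]]
      line_nonzero ikm jln br by auto
qed

end

lemma (in line_arrangement) R_in_K2T:
  "i \<in> {1..N} \<Longrightarrow> l \<in> {1..N} \<Longrightarrow> i \<noteq> l \<Longrightarrow> j \<in> {1..Ns i} \<Longrightarrow> k \<in> {1..Ns i} \<Longrightarrow>
   m \<in> {1..Ns l} \<Longrightarrow> n \<in> {1..Ns l} \<Longrightarrow> symbol_in_K2T K (L i j / L i k) (L l m / L l n)"
  unfolding symbol_in_K2T_def
  using arrangement_place.R_tame_trivial[of K] line_arrangement_axioms
  by (simp add: arrangement_place_def discrete_val_def)

lemma (in line_arrangement) T_in_K2T:
  "i \<in> {1..N} \<Longrightarrow> k \<in> {1..N} \<Longrightarrow> m \<in> {1..N} \<Longrightarrow> i \<noteq> k \<Longrightarrow> i \<noteq> m \<Longrightarrow> k \<noteq> m \<Longrightarrow>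
   j \<in> {1..Ns i} \<Longrightarrow> l \<in> {1..Ns k} \<Longrightarrow> n \<in> {1..Ns m} \<Longrightarrow>
   symbol_in_K2T K (br i m / br k m * L k l / L i j) (br i k / br m k * L m n / L i j)"
  unfolding symbol_in_K2T_def
  using arrangement_place.T_tame_trivial[of K] line_arrangement_axioms
  by (simp add: arrangement_place_def discrete_val_def)

theorem lemma2p2:
  fixes K :: "'a::field set" and x y lam :: 'a
    and N :: nat and Ns :: "nat \<Rightarrow> nat"
    and a b :: "nat \<Rightarrow> 'a" and c :: "nat \<Rightarrow> nat \<Rightarrow> 'a"
    and L :: "nat \<Rightarrow> nat \<Rightarrow> 'a" and br :: "nat \<Rightarrow> nat \<Rightarrow> 'a"
  assumes K: "subfield K"
    and gen: "generated_by K x y"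
    and trans: "transcendental_over K x"
    and N: "N \<ge> 2"
    and Ns: "\<And>i. i \<in> {1..N} \<Longrightarrow> Ns i \<ge> 1"
    and abK: "\<And>i. i \<in> {1..N} \<Longrightarrow> a i \<in> K \<and> b i \<in> K \<and> (a i, b i) \<noteq> (0, 0)"
    and cK: "\<And>i j. i \<in> {1..N} \<Longrightarrow> j \<in> {1..Ns i} \<Longrightarrow> c i j \<in> K"
    and distinct: "\<And>i j i' j'. i \<in> {1..N} \<Longrightarrow> j \<in> {1..Ns i} \<Longrightarrow>
        i' \<in> {1..N} \<Longrightarrow> j' \<in> {1..Ns i'} \<Longrightarrow> (i, j) \<noteq> (i', j') \<Longrightarrow>
        {(u, w). u \<in> K \<and> w \<in> K \<and> a i * u + b i * w + c i j = 0} \<noteq>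
        {(u, w). u \<in> K \<and> w \<in> K \<and> a i' * u + b i' * w + c i' j' = 0}"
    and br_def: "\<And>i k. br i k = a i * b k - a k * b i"
    and br_nz: "\<And>i k. i \<in> {1..N} \<Longrightarrow> k \<in> {1..N} \<Longrightarrow> i \<noteq> k \<Longrightarrow> br i k \<noteq> 0"
    and lamK: "lam \<in> K" and lam_nz: "lam \<noteq> 0"
    and L_def: "\<And>i j. L i j = a i * x + b i * y + c i j"
    and curve: "lam * (\<Prod>i\<in>{1..N}. \<Prod>j\<in>{1..Ns i}. L i j) - 1 = 0"
  shows "(\<forall>i j k l m n. i \<in> {1..N} \<and> l \<in> {1..N} \<and> i \<noteq> l \<and>
            j \<in> {1..Ns i} \<and> k \<in> {1..Ns i} \<and> m \<in> {1..Ns l} \<and> n \<in> {1..Ns l} \<longrightarrow>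
            symbol_in_K2T K (L i j / L i k) (L l m / L l n))
       \<and> (\<forall>i j k l m n. i \<in> {1..N} \<and> k \<in> {1..N} \<and> m \<in> {1..N} \<and>
            i \<noteq> k \<and> i \<noteq> m \<and> k \<noteq> m \<and>
            j \<in> {1..Ns i} \<and> l \<in> {1..Ns k} \<and> n \<in> {1..Ns m} \<longrightarrow>
            symbol_in_K2T K (br i m / br k m * L k l / L i j)
                            (br i k / br m k * L m n / L i j))"
proof -
  interpret line_arrangement K x y lam N Ns a b c L br
  proof
    show "lam * (\<Prod>i\<in>{1..N}. \<Prod>j\<in>{1..Ns i}. L i j) = 1" using curve by simp
  qed (use K abK cK br_def br_nz lamK lam_nz L_def in auto)
  show ?thesis using R_in_K2T T_in_K2T by blast
qed

end
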